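(* Let $n\ge 1$ and let $Q$ be a quiver (with arbitrary orientation of its arrows) whose underlying graph is a Dynkin graph of type $A_r$, $D_r$, $E_6$, $E_7$ or $E_8$, so that $Q$ has $r$ vertices and $r-1$ arrows. Let $\beta=(n,\dots,n)$. Then the ring of $\mathbb{U}_\beta$-invariant polynomial functions on $F^{\bullet}Rep(Q,\beta)\cong\mathfrak{b}_n^{\oplus (r-1)}$ is $$\mathbb{C}[F^{\bullet}Rep(Q,\beta)]^{\mathbb{U}_\beta}=\mathbb{C}[\mathfrak{t}_n^{\oplus (r-1)}],$$ i.e. it is the subalgebra generated by the diagonal entries $(A_a)_{kk}$, $1\le k\le n$, $a\in Q_1$ (a polynomial ring in $n(r-1)$ variables).
   Context: For a quiver $Q=(Q_0,Q_1)$ with head and tail maps $h,t:Q_1\to Q_0$ and dimension vector $\beta=(n,\dots,n)$, put the vector space $\mathbb{C}^n$ at each vertex with the complete standard flag $0\subset\mathbb{C}^1\subset\cdots\subset\mathbb{C}^n$ ($\mathbb{C}^k$ spanned by the first $k$ standard basis vectors). The filtered quiver variety $F^{\bullet}Rep(Q,\beta)$ is the space of tuples $(A_a)_{a\in Q_1}$ of $n\times n$ matrices with $A_a(\mathbb{C}^k)\subseteq\mathbb{C}^k$ for all $k$, i.e. $F^{\bullet}Rep(Q,\beta)=\mathfrak{b}_n^{\oplus Q_1}$ where $\mathfrak{b}_n$ is the space of upper triangular $n\times n$ complex matrices. Let $U\subset GL_n(\mathbb{C})$ be the group of upper triangular unipotent matrices and $\mathbb{U}_\beta=U^{Q_0}$,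 acting by $(u_i)_{i\in Q_0}\cdot(A_a)_{a}=(u_{h(a)}A_au_{t(a)}^{-1})_a$; it acts on polynomial functions by $(u\cdot f)(A)=f(u^{-1}\cdot A)$. $\mathfrak{t}_n$ denotes the diagonal $n\times n$ matrices, and $\mathbb{C}[\mathfrak{t}_n^{\oplus Q_1}]$ denotes the subalgebra of $\mathbb{C}[\mathfrak{b}_n^{\oplus Q_1}]$ generated by the diagonal entries of the $A_a$. *)

theory Defs
  imports Complex_Main
begin

datatype dynkin_type = Dyn_A nat | Dyn_D nat | Dyn_E nat

fun dynkin_valid :: "dynkin_type \<Rightarrow> bool" where
  "dynkin_valid (Dyn_A r) = (r \<ge> 1)"
| "dynkin_valid (Dyn_D r) = (r \<ge> 4)"
| "dynkin_valid (Dyn_E r) = (r \<in> {6, 7, 8})"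

fun dynkin_rank :: "dynkin_type \<Rightarrow> nat" where
  "dynkin_rank (Dyn_A r) = r"
| "dynkin_rank (Dyn_D r) = r"
| "dynkin_rank (Dyn_E r) = r"

fun dynkin_edges :: "dynkin_type \<Rightarrow> nat set set" where
  "dynkin_edges (Dyn_A r) = {{i, i + 1} | i. i + 1 < r}"
| "dynkin_edges (Dyn_D r) = {{i, i + 1} | i. i + 2 < r} \<union> {{r - 3, r - 1}}"
| "dynkin_edges (Dyn_E r) = {{i, i + 1} | i. i + 2 < r} \<union> {{2, r - 1}}"

text \<open>A quiver (Q0, Q1, h, t) whose underlying graph is the Dynkin graph of type T:
  heads/tails of arrows are vertices, and there is a bijection of the vertices with
  {0..<r} inducing a bijection of the arrows with the edges of the standard Dynkin graph
  (so no loops, no multiple edges, arbitrary orientation).\<close>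
definition dynkin_quiver ::
  "dynkin_type \<Rightarrow> 'v set \<Rightarrow> 'e set \<Rightarrow> ('e \<Rightarrow> 'v) \<Rightarrow> ('e \<Rightarrow> 'v) \<Rightarrow> bool" where
  "dynkin_quiver T Q0 Q1 h t \<longleftrightarrow>
     dynkin_valid T \<and> h ` Q1 \<subseteq> Q0 \<and> t ` Q1 \<subseteq> Q0 \<and>
     (\<exists>\<phi>. bij_betw \<phi> Q0 {..<dynkin_rank T} \<and>
          bij_betw (\<lambda>a. {\<phi> (t a), \<phi> (h a)}) Q1 (dynkin_edges T))"

section \<open>Matrices (n x n, indices 0..<n, entries outside are 0)\<close>

type_synonym cmat = "nat \<Rightarrow> nat \<Rightarrow> complex"

definition mat_mult :: "nat \<Rightarrow> cmat \<Rightarrow> cmat \<Rightarrow> cmat" where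
  "mat_mult n X Y = (\<lambda>i j. if i < n \<and> j < n then (\<Sum>k<n. X i k * Y k j) else 0)"

definition mat_id :: "nat \<Rightarrow> cmat" where
  "mat_id n = (\<lambda>i j. if i < n \<and> j < n \<and> i = j then 1 else 0)"

definition unipotent :: "nat \<Rightarrow> cmat set" where
  "unipotent n = {u. (\<forall>i j. (n \<le> i \<or> n \<le> j \<or> j < i) \<longrightarrow> u i j = 0) \<and> (\<forall>i<n. u i i = 1)}"

text \<open>F Rep(Q,beta) = b_n^{Q1}: tuples of upper triangular n x n matrices indexed by arrows
  (entries outside the range and at non-arrows are 0).\<close>
definition filtered_rep :: "'e set \<Rightarrow> nat \<Rightarrow> ('e \<Rightarrow> cmat) set" where
  "filtered_rep Q1 n = {A. \<forall>a i j. A a i j \<noteq> 0 \<longrightarrow> a \<in> Q1 \<and> i \<le> j \<and> j < n}"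

definition upper_coords :: "'e set \<Rightarrow> nat \<Rightarrow> ('e \<times> nat \<times> nat) set" where
  "upper_coords Q1 n = {(a, i, j). a \<in> Q1 \<and> i \<le> j \<and> j < n}"

definition diag_coords :: "'e set \<Rightarrow> nat \<Rightarrow> ('e \<times> nat \<times> nat) set" where
  "diag_coords Q1 n = {(a, k, k) | a k. a \<in> Q1 \<and> k < n}"

inductive_set poly_fun :: "('e \<times> nat \<times> nat) set \<Rightarrow> (('e \<Rightarrow> cmat) \<Rightarrow> complex) set"
  for C :: "('e \<times> nat \<times> nat) set" where
  const: "(\<lambda>_. c) \<in> poly_fun C"
| coord: "(a, i, j) \<in> C \<Longrightarrow> (\<lambda>A. A a i j) \<in> poly_fun C"
| add: "f \<in> poly_fun C \<Longrightarrow> g \<in> poly_fun C \<Longrightarrow> (\<lambda>A. f A + g A) \<in> poly_fun C"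
| mult: "f \<in> poly_fun C \<Longrightarrow> g \<in> poly_fun C \<Longrightarrow> (\<lambda>A. f A * g A) \<in> poly_fun C"

text \<open>(u_i) . (A_a) = (u_{h a} A_a u_{t a}^{-1}); here v i is the inverse of u i.\<close>
definition quiver_act ::
  "nat \<Rightarrow> ('e \<Rightarrow> 'v) \<Rightarrow> ('e \<Rightarrow> 'v) \<Rightarrow> ('v \<Rightarrow> cmat) \<Rightarrow> ('v \<Rightarrow> cmat) \<Rightarrow> ('e \<Rightarrow> cmat) \<Rightarrow> ('e \<Rightarrow> cmat)" where
  "quiver_act n h t u v A = (\<lambda>a. mat_mult n (mat_mult n (u (h a)) (A a)) (v (t a)))"

text \<open>f is U_beta-invariant as a function on F Rep(Q,beta).  (Invariance under all u is
  the same as invariance under all u^{-1}, so the convention (u.f)(A)=f(u^{-1}.A) is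
  immaterial.)\<close>
definition U_invariant ::
  "'v set \<Rightarrow> 'e set \<Rightarrow> ('e \<Rightarrow> 'v) \<Rightarrow> ('e \<Rightarrow> 'v) \<Rightarrow> nat \<Rightarrow> (('e \<Rightarrow> cmat) \<Rightarrow> complex) \<Rightarrow> bool" where
  "U_invariant Q0 Q1 h t n f \<longleftrightarrow>
     (\<forall>u v. (\<forall>i\<in>Q0. u i \<in> unipotent n \<and> v i \<in> unipotent n \<and> mat_mult n (u i) (v i) = mat_id n)
        \<longrightarrow> (\<forall>A\<in>filtered_rep Q1 n. f (quiver_act n h t u v A) = f A))"

end

theory Submission
  imports Defs "HOL-Analysis.Elementary_Topology"
begin

text \<open>The diagonal entries of u A v, for u and v unipotent upper triangular, are those of A,
  so polynomials in them are invariant. Conversely let f be invariant, and suppose first that all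
  diagonal entries of A are nonzero. Since the underlying graph of Q is a tree, its arrows can be
  ordered so that each has an endpoint w met by no earlier arrow. Gaussian elimination with the
  diagonal pivots yields a unipotent matrix at w that makes the matrix of that arrow diagonal (by
  row operations if w is its head, by column operations if w is its tail) and leaves the earlier
  arrows alone. So f A equals f of the diagonal part of A on a dense set, hence everywhere by
  continuity.\<close>

section \<open>Upper triangular and unipotent matrices\<close>

lemma sum_lessThan_single:
  fixes g :: "nat \<Rightarrow> 'a::comm_monoid_add"
  assumes "m < n" and "\<And>k. k \<noteq> m \<Longrightarrow> g k = 0"
  shows "(\<Sum>k<n. g k) = g m"
  using assms by (subst sum.remove[of _ m]) (auto intro: sum.neutral)

definition upper_triangular :: "nat \<Rightarrow> cmat set" where
  "upper_triangular n = {M. \<forall>i j. M i j \<noteq> 0 \<longrightarrow> i \<le> j \<and> j < n}"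

lemma upper_triangularD: "M \<in> upper_triangular n \<Longrightarrow> M i j \<noteq> 0 \<Longrightarrow> i \<le> j \<and> j < n"
  unfolding upper_triangular_def by blast

lemma upper_triangular_eq_0: "M \<in> upper_triangular n \<Longrightarrow> \<not> (i \<le> j \<and> j < n) \<Longrightarrow> M i j = 0"
  unfolding upper_triangular_def by blast

lemma unipotent_imp_upper_triangular:
  assumes "U \<in> unipotent n"
  shows "U \<in> upper_triangular n"
proof -
  have "U i j = 0" if "n \<le> i \<or> n \<le> j \<or> j < i" for i j
    using assms that unfolding unipotent_def by blast
  then show ?thesis
    unfolding upper_triangular_def by (auto simp flip: not_le)
qed

lemma mat_id_unipotent: "mat_id n \<in> unipotent n"
  by (auto simp: mat_id_def unipotent_def)

lemma sum_mat_id_left: "i < n \<Longrightarrow> (\<Sum>k<n. mat_id n i k * X k) = X i"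
  by (subst sum_lessThan_single[of i]) (auto simp: mat_id_def)

lemma sum_mat_id_right: "j < n \<Longrightarrow> (\<Sum>k<n. X k * mat_id n k j) = X j"
  by (subst sum_lessThan_single[of j]) (auto simp: mat_id_def)

lemma mat_mult_id_left: "M \<in> upper_triangular n \<Longrightarrow> mat_mult n (mat_id n) M = M"
  by (intro ext) (auto simp: mat_mult_def sum_mat_id_left upper_triangular_eq_0)

lemma mat_mult_id_right: "M \<in> upper_triangular n \<Longrightarrow> mat_mult n M (mat_id n) = M"
  by (intro ext) (auto simp: mat_mult_def sum_mat_id_right upper_triangular_eq_0)

lemma mat_mult_assoc: "mat_mult n (mat_mult n X Y) Z = mat_mult n X (mat_mult n Y Z)"
proof (intro ext)
  fix i j
  have "(\<Sum>k<n. (\<Sum>l<n. X i l * Y l k) * Z k j) = (\<Sum>l<n. \<Sum>k<n. X i l * Y l k * Z k j)"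
    unfolding sum_distrib_right by (rule sum.swap)
  also have "\<dots> = (\<Sum>l<n. X i l * (\<Sum>k<n. Y l k * Z k j))"
    by (simp add: sum_distrib_left mult.assoc)
  finally show "mat_mult n (mat_mult n X Y) Z i j = mat_mult n X (mat_mult n Y Z) i j"
    by (simp add: mat_mult_def)
qed

lemma mat_mult_upper_triangular:
  assumes X: "X \<in> upper_triangular n" and Y: "Y \<in> upper_triangular n"
  shows "mat_mult n X Y \<in> upper_triangular n"
  unfolding upper_triangular_def mem_Collect_eq
proof (intro allI impI)
  fix i j assume "mat_mult n X Y i j \<noteq> 0"
  then have sum: "(\<Sum>k<n. X i k * Y k j) \<noteq> 0" and "j < n"
    by (auto simp: mat_mult_def split: if_splits)
  from sum obtain k where "X i k * Y k j \<noteq> 0"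
    by (rule sum.not_neutral_contains_not_neutral)
  then show "i \<le> j \<and> j < n"
    using upper_triangularD[OF X] upper_triangularD[OF Y] \<open>j < n\<close> by force
qed

lemma mat_mult_diag:
  assumes X: "X \<in> upper_triangular n" and Y: "Y \<in> upper_triangular n" and "k < n"
  shows "mat_mult n X Y k k = X k k * Y k k"
proof -
  have "X k m * Y m k = 0" if "m \<noteq> k" for m
    using upper_triangular_eq_0[OF X, of k m] upper_triangular_eq_0[OF Y, of m k] that by force
  then show ?thesis
    using \<open>k < n\<close> by (simp add: mat_mult_def sum_lessThan_single[of k])
qed

lemma unipotent_mat_mult:
  assumes U: "U \<in> unipotent n" and V: "V \<in> unipotent n"
  shows "mat_mult n U V \<in> unipotent n"
proof -
  have U': "U \<in> upper_triangular n" and V': "V \<in> upper_triangular n"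
    using U V by (simp_all add: unipotent_imp_upper_triangular)
  have "mat_mult n U V k k = 1" if "k < n" for k
    using U V that by (simp add: mat_mult_diag[OF U' V'] unipotent_def)
  then show ?thesis
    using upper_triangular_eq_0[OF mat_mult_upper_triangular[OF U' V']]
    unfolding unipotent_def by auto
qed

definition unipotent_inverses :: "nat \<Rightarrow> cmat \<Rightarrow> cmat \<Rightarrow> bool" where
  "unipotent_inverses n U V \<longleftrightarrow>
     U \<in> unipotent n \<and> V \<in> unipotent n \<and> mat_mult n U V = mat_id n"

lemma unipotent_inverses_id: "unipotent_inverses n (mat_id n) (mat_id n)"
  by (simp add: unipotent_inverses_def mat_id_unipotent mat_mult_id_left
      unipotent_imp_upper_triangular)

lemma unipotent_inverses_mult:
  assumes "unipotent_inverses n U V" and "unipotent_inverses n X Y"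
  shows "unipotent_inverses n (mat_mult n X U) (mat_mult n V Y)"
proof -
  have "mat_mult n (mat_mult n X U) (mat_mult n V Y) = mat_mult n X (mat_mult n (mat_mult n U V) Y)"
    by (simp add: mat_mult_assoc)
  also have "\<dots> = mat_id n"
    using assms by (simp add: unipotent_inverses_def mat_mult_id_left unipotent_imp_upper_triangular)
  finally show ?thesis
    using assms by (simp add: unipotent_inverses_def unipotent_mat_mult)
qed

definition mat_id_plus :: "nat \<Rightarrow> cmat \<Rightarrow> cmat" where
  "mat_id_plus n N = (\<lambda>i j. mat_id n i j + N i j)"

lemma mat_mult_id_plus_left:
  "i < n \<Longrightarrow> j < n \<Longrightarrow> mat_mult n (mat_id_plus n N) M i j = M i j + (\<Sum>k<n. N i k * M k j)"
  by (simp add: mat_mult_def mat_id_plus_def distrib_right sum.distrib sum_mat_id_left)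

lemma mat_mult_id_plus_right:
  "i < n \<Longrightarrow> j < n \<Longrightarrow> mat_mult n M (mat_id_plus n N) i j = M i j + (\<Sum>k<n. M i k * N k j)"
  by (simp add: mat_mult_def mat_id_plus_def distrib_left sum.distrib sum_mat_id_right)

lemma unipotent_inverses_id_plus:
  assumes strict: "\<And>i j. N i j \<noteq> 0 \<Longrightarrow> i < j \<and> j < n"
    and square_zero: "\<And>i k j. N i k \<noteq> 0 \<Longrightarrow> N k j = 0"
  shows "unipotent_inverses n (mat_id_plus n N) (mat_id_plus n (- N))"
proof -
  have unipotent: "mat_id_plus n N' \<in> unipotent n"
    if strict': "\<And>i j. N' i j \<noteq> 0 \<Longrightarrow> i < j \<and> j < n" for N'
  proof -
    have "N' i j = 0" if "n \<le> i \<or> n \<le> j \<or> j \<le> i" for i j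
      using strict'[of i j] that by (cases "N' i j = 0") auto
    then show ?thesis
      unfolding unipotent_def mat_id_plus_def mat_id_def by auto
  qed
  have "mat_mult n (mat_id_plus n N) (mat_id_plus n (- N)) = mat_id n"
  proof (intro ext)
    fix i j
    show "mat_mult n (mat_id_plus n N) (mat_id_plus n (- N)) i j = mat_id n i j"
    proof (cases "i < n \<and> j < n")
      case True
      have "(\<Sum>k<n. N i k * N k j) = 0"
      proof (intro sum.neutral ballI)
        fix k
        show "N i k * N k j = 0"
          using square_zero[of i k j] by (cases "N i k = 0") auto
      qed
      then have "mat_mult n (mat_id_plus n N) (mat_id_plus n (- N)) i j
          = mat_id n i j - N i j + (\<Sum>k<n. N i k * mat_id n k j)"
        using True by (simp add: mat_mult_id_plus_left)
          (simp add: mat_id_plus_def right_diff_distrib sum_subtractf)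
      also have "\<dots> = mat_id n i j"
        using True by (simp add: sum_mat_id_right)
      finally show ?thesis .
    next
      case False
      then show ?thesis by (auto simp: mat_mult_def mat_id_def)
    qed
  qed
  moreover have "mat_id_plus n N \<in> unipotent n"
    using strict by (rule unipotent)
  moreover have "mat_id_plus n (- N) \<in> unipotent n"
    using strict by (intro unipotent) simp
  ultimately show ?thesis
    unfolding unipotent_inverses_def by blast
qed

section \<open>Diagonalization by unipotent matrices\<close>

lemma unipotent_left_diagonalize:
  assumes M: "M \<in> upper_triangular n" and nz: "\<forall>k<n. M k k \<noteq> 0"
  shows "\<exists>U V. unipotent_inverses n U V \<and> (\<forall>i j. i < j \<longrightarrow> mat_mult n U M i j = 0)"
proof -
  have "\<exists>U V. unipotent_inverses n U V \<and> (\<forall>i j. i < j \<and> j < m \<longrightarrow> mat_mult n U M i j = 0)"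
    if "m \<le> n" for m
    using that
  proof (induction m)
    case 0
    show ?case using unipotent_inverses_id by blast
  next
    case (Suc m)
    then obtain U V where UV: "unipotent_inverses n U V"
      and cleared: "\<forall>i j. i < j \<and> j < m \<longrightarrow> mat_mult n U M i j = 0" by auto
    define M' where "M' = mat_mult n U M"
    have U: "U \<in> upper_triangular n" "\<forall>k<n. U k k = 1"
      using UV by (auto simp: unipotent_inverses_def unipotent_imp_upper_triangular unipotent_def)
    have M': "M' \<in> upper_triangular n"
      unfolding M'_def using U(1) M by (rule mat_mult_upper_triangular)
    have Mmm: "M' m m \<noteq> 0"
      using Suc.prems nz U by (simp add: M'_def mat_mult_diag[OF _ M])
    \<comment> \<open>Clear column m of M' above the diagonal by row operations with the pivot M' m m.\<close>
    define N where "N i j = (if j = m \<and> i < m then - M' i m / M' m m else 0)" for i j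
    have E: "unipotent_inverses n (mat_id_plus n N) (mat_id_plus n (- N))"
      by (rule unipotent_inverses_id_plus) (use Suc.prems in \<open>auto simp: N_def split: if_splits\<close>)
    have "mat_mult n (mat_mult n (mat_id_plus n N) U) M i j = 0" if "i < j" "j < Suc m" for i j
    proof -
      have "(\<Sum>k<n. N i k * M' k j) = N i m * M' m j"
        using Suc.prems by (intro sum_lessThan_single) (auto simp: N_def)
      then have "mat_mult n (mat_mult n (mat_id_plus n N) U) M i j = M' i j + N i m * M' m j"
        using that Suc.prems by (simp add: mat_mult_assoc mat_mult_id_plus_left flip: M'_def)
      also have "\<dots> = 0"
        using that Mmm cleared upper_triangular_eq_0[OF M', of m j]
        by (cases "j = m") (auto simp: N_def M'_def)
      finally show ?thesis .
    qed
    then show ?case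
      using unipotent_inverses_mult[OF UV E] by blast
  qed
  then obtain U V where "unipotent_inverses n U V"
    and cleared: "\<forall>i j. i < j \<and> j < n \<longrightarrow> mat_mult n U M i j = 0" by blast
  moreover have "mat_mult n U M i j = 0" if "n \<le> j" for i j
    using that by (simp add: mat_mult_def)
  ultimately show ?thesis
    by (metis not_le)
qed

lemma unipotent_right_diagonalize:
  assumes M: "M \<in> upper_triangular n" and nz: "\<forall>k<n. M k k \<noteq> 0"
  shows "\<exists>U V. unipotent_inverses n U V \<and> (\<forall>i j. i < j \<longrightarrow> mat_mult n M V i j = 0)"
proof -
  have "\<exists>U V. unipotent_inverses n U V \<and> (\<forall>i j. m \<le> i \<and> i < j \<longrightarrow> mat_mult n M V i j = 0)"
    if "m \<le> n" for m
    using that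
  proof (induction m rule: inc_induct)
    case base
    have "mat_mult n M (mat_id n) i j = 0" if "n \<le> i" for i j
      using that by (simp add: mat_mult_def)
    then show ?case using unipotent_inverses_id by blast
  next
    case (step m)
    then obtain U V where UV: "unipotent_inverses n U V"
      and cleared: "\<forall>i j. Suc m \<le> i \<and> i < j \<longrightarrow> mat_mult n M V i j = 0" by auto
    define M' where "M' = mat_mult n M V"
    have V: "V \<in> upper_triangular n" "\<forall>k<n. V k k = 1"
      using UV by (auto simp: unipotent_inverses_def unipotent_imp_upper_triangular unipotent_def)
    have M': "M' \<in> upper_triangular n"
      unfolding M'_def using M V(1) by (rule mat_mult_upper_triangular)
    have Mmm: "M' m m \<noteq> 0"
      using step.hyps nz V by (simp add: M'_def mat_mult_diag[OF M])
    \<comment> \<open>Clear row m of M' right of the diagonal by column operations with the pivot M' m m.\<close>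
    define N where "N i j = (if i = m \<and> m < j \<and> j < n then M' m j / M' m m else 0)" for i j
    have E: "unipotent_inverses n (mat_id_plus n N) (mat_id_plus n (- N))"
      by (rule unipotent_inverses_id_plus) (auto simp: N_def split: if_splits)
    have "mat_mult n M (mat_mult n V (mat_id_plus n (- N))) i j = 0" if "m \<le> i" "i < j" for i j
    proof (cases "j < n")
      case True
      have "(\<Sum>k<n. M' i k * (- N) k j) = M' i m * (- N) m j"
        using step.hyps by (intro sum_lessThan_single) (auto simp: N_def)
      then have "mat_mult n M (mat_mult n V (mat_id_plus n (- N))) i j = M' i j + M' i m * (- N) m j"
        using that True by (simp add: mat_mult_id_plus_right flip: mat_mult_assoc M'_def)
      also have "\<dots> = 0"
        using that True Mmm cleared upper_triangular_eq_0[OF M', of i m]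
        by (cases "i = m") (auto simp: N_def M'_def)
      finally show ?thesis .
    qed (simp add: mat_mult_def)
    then show ?case
      using unipotent_inverses_mult[OF UV E] by auto
  qed
  from this[of 0] show ?thesis by simp
qed

section \<open>The unipotent action on filtered representations\<close>

definition rep_diag :: "('e \<Rightarrow> cmat) \<Rightarrow> 'e \<Rightarrow> cmat" where
  "rep_diag A = (\<lambda>a i j. if i = j then A a i j else 0)"

lemma rep_diag_eqD: "rep_diag B = rep_diag A \<Longrightarrow> B a k k = A a k k"
proof -
  assume "rep_diag B = rep_diag A"
  then have "rep_diag B a k k = rep_diag A a k k" by simp
  then show ?thesis by (simp add: rep_diag_def)
qed

lemma filtered_rep_iff:
  "A \<in> filtered_rep Q1 n \<longleftrightarrow>
     (\<forall>a. A a \<in> upper_triangular n) \<and> (\<forall>a i j. a \<notin> Q1 \<longrightarrow> A a i j = 0)"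
  unfolding filtered_rep_def upper_triangular_def by blast

lemma filtered_rep_eq_rep_diag:
  assumes A: "A \<in> filtered_rep Q1 n" and diag: "\<forall>a\<in>Q1. \<forall>i j. i < j \<longrightarrow> A a i j = 0"
  shows "rep_diag A = A"
proof (intro ext)
  fix a i j
  show "rep_diag A a i j = A a i j"
    using A diag upper_triangular_eq_0[of "A a" n i j]
    by (cases "a \<in> Q1"; cases i j rule: linorder_cases) (auto simp: rep_diag_def filtered_rep_iff)
qed

lemma quiver_act_filtered_rep:
  assumes A: "A \<in> filtered_rep Q1 n"
    and u: "\<forall>i\<in>h ` Q1. u i \<in> unipotent n" and v: "\<forall>i\<in>t ` Q1. v i \<in> unipotent n"
  shows "quiver_act n h t u v A \<in> filtered_rep Q1 n"
    and "rep_diag (quiver_act n h t u v A) = rep_diag A"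
proof -
  let ?B = "quiver_act n h t u v A"
  have outside: "?B a i j = 0" if "a \<notin> Q1" for a i j
    using A that by (simp add: filtered_rep_iff quiver_act_def mat_mult_def)
  have inside: "?B a \<in> upper_triangular n \<and> (\<forall>k<n. ?B a k k = A a k k)" if "a \<in> Q1" for a
  proof -
    have "u (h a) \<in> unipotent n" "v (t a) \<in> unipotent n"
      using u v that by blast+
    then have u: "u (h a) \<in> upper_triangular n" "\<forall>k<n. u (h a) k k = 1"
      and v: "v (t a) \<in> upper_triangular n" "\<forall>k<n. v (t a) k k = 1"
      by (auto simp: unipotent_imp_upper_triangular unipotent_def)
    have "A a \<in> upper_triangular n" using A by (simp add: filtered_rep_iff)
    then show ?thesis
      using u v by (simp add: quiver_act_def mat_mult_upper_triangular mat_mult_diag)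
  qed
  show filtered: "?B \<in> filtered_rep Q1 n"
    unfolding filtered_rep_iff
  proof (intro conjI allI impI)
    fix a
    show "?B a \<in> upper_triangular n"
      using inside[of a] outside[of a] by (cases "a \<in> Q1") (simp_all add: upper_triangular_def)
  qed (rule outside)
  have "?B a k k = A a k k" for a k
  proof (cases "a \<in> Q1 \<and> k < n")
    case True
    then show ?thesis using inside by blast
  next
    case False
    then consider "a \<notin> Q1" | "\<not> k < n" by blast
    then show ?thesis
    proof cases
      case 1
      then show ?thesis using outside A by (simp add: filtered_rep_iff)
    next
      case 2
      then show ?thesis
        using upper_triangular_eq_0[of "A a" n k k] upper_triangular_eq_0[of "?B a" n k k] A filtered
        by (simp add: filtered_rep_iff)
    qed
  qed
  then show "rep_diag ?B = rep_diag A"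
    by (simp add: rep_diag_def fun_eq_iff)
qed

lemma quiver_act_diag_coords:
  assumes "A \<in> filtered_rep Q1 n"
    and "\<forall>i\<in>h ` Q1. u i \<in> unipotent n" and "\<forall>i\<in>t ` Q1. v i \<in> unipotent n"
    and "(a, i, j) \<in> diag_coords Q1 n"
  shows "quiver_act n h t u v A a i j = A a i j"
  using rep_diag_eqD[OF quiver_act_filtered_rep(2)[OF assms(1-3)]] assms(4)
  by (auto simp: diag_coords_def)

definition at_vertex :: "nat \<Rightarrow> 'v \<Rightarrow> cmat \<Rightarrow> 'v \<Rightarrow> cmat" where
  "at_vertex n w U = (\<lambda>i. if i = w then U else mat_id n)"

lemma quiver_act_at_vertex:
  assumes A: "A \<in> filtered_rep Q1 n" and U: "U \<in> upper_triangular n"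
  shows "h a \<noteq> w \<Longrightarrow> t a \<noteq> w \<Longrightarrow> quiver_act n h t (at_vertex n w U) (at_vertex n w V) A a = A a"
    and "h a = w \<Longrightarrow> t a \<noteq> w \<Longrightarrow>
      quiver_act n h t (at_vertex n w U) (at_vertex n w V) A a = mat_mult n U (A a)"
    and "t a = w \<Longrightarrow> h a \<noteq> w \<Longrightarrow>
      quiver_act n h t (at_vertex n w U) (at_vertex n w V) A a = mat_mult n (A a) V"
  using A U
  by (simp_all add: quiver_act_def at_vertex_def filtered_rep_iff mat_mult_id_left
      mat_mult_id_right mat_mult_upper_triangular)

lemma U_invariant_at_vertex:
  assumes "U_invariant Q0 Q1 h t n f" and "unipotent_inverses n U V" and "A \<in> filtered_rep Q1 n"
  shows "f (quiver_act n h t (at_vertex n w U) (at_vertex n w V) A) = f A"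
  using assms unipotent_inverses_id
  unfolding U_invariant_def at_vertex_def unipotent_inverses_def by simp

lemma U_invariant_diagonalize_arrow:
  assumes inv: "U_invariant Q0 Q1 h t n f" and A: "A \<in> filtered_rep Q1 n"
    and loopfree: "h a0 \<noteq> t a0" and w: "w \<in> {h a0, t a0}" and nz: "\<forall>k<n. A a0 k k \<noteq> 0"
  shows "\<exists>B\<in>filtered_rep Q1 n. rep_diag B = rep_diag A \<and> f B = f A \<and>
           (\<forall>a. h a \<noteq> w \<and> t a \<noteq> w \<longrightarrow> B a = A a) \<and> (\<forall>i j. i < j \<longrightarrow> B a0 i j = 0)"
proof -
  let ?act = "\<lambda>U V. quiver_act n h t (at_vertex n w U) (at_vertex n w V) A"
  have A0: "A a0 \<in> upper_triangular n" using A by (simp add: filtered_rep_iff)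
  obtain U V where UV: "unipotent_inverses n U V"
    and cleared: "\<forall>i j. i < j \<longrightarrow> ?act U V a0 i j = 0"
  proof (cases "w = h a0")
    case True
    obtain U V where UV: "unipotent_inverses n U V"
      and cleared: "\<forall>i j. i < j \<longrightarrow> mat_mult n U (A a0) i j = 0"
      using unipotent_left_diagonalize[OF A0 nz] by blast
    have "U \<in> upper_triangular n"
      using UV unipotent_imp_upper_triangular unfolding unipotent_inverses_def by blast
    then have "?act U V a0 = mat_mult n U (A a0)"
      using True loopfree by (intro quiver_act_at_vertex(2)[OF A]) simp_all
    then show ?thesis using that[OF UV] cleared by simp
  next
    case False
    obtain U V where UV: "unipotent_inverses n U V"
      and cleared: "\<forall>i j. i < j \<longrightarrow> mat_mult n (A a0) V i j = 0"
      using unipotent_right_diagonalize[OF A0 nz] by blast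
    have "U \<in> upper_triangular n"
      using UV unipotent_imp_upper_triangular unfolding unipotent_inverses_def by blast
    then have "?act U V a0 = mat_mult n (A a0) V"
      using False w loopfree by (intro quiver_act_at_vertex(3)[OF A]) auto
    then show ?thesis using that[OF UV] cleared by simp
  qed
  define B where "B = ?act U V"
  have U: "U \<in> upper_triangular n"
    using UV unipotent_imp_upper_triangular unfolding unipotent_inverses_def by blast
  have u: "\<forall>i\<in>h ` Q1. at_vertex n w U i \<in> unipotent n"
    and v: "\<forall>i\<in>t ` Q1. at_vertex n w V i \<in> unipotent n"
    using UV by (simp_all add: at_vertex_def unipotent_inverses_def mat_id_unipotent)
  have "B \<in> filtered_rep Q1 n" and "rep_diag B = rep_diag A"
    unfolding B_def using quiver_act_filtered_rep[OF A u v] by simp_all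
  moreover have "f B = f A"
    unfolding B_def using U_invariant_at_vertex[OF inv UV A] .
  moreover have "B a = A a" if "h a \<noteq> w" "t a \<noteq> w" for a
    unfolding B_def using that by (rule quiver_act_at_vertex(1)[OF A U])
  moreover have "\<forall>i j. i < j \<longrightarrow> B a0 i j = 0"
    using cleared by (simp add: B_def)
  ultimately show ?thesis by blast
qed

section \<open>Invariants of forest quivers\<close>

text \<open>These are exactly the finite arrow sets whose underlying graph is a forest (without loops
  or multiple edges).\<close>
inductive forest_arrows :: "('e \<Rightarrow> 'v) \<Rightarrow> ('e \<Rightarrow> 'v) \<Rightarrow> 'e set \<Rightarrow> bool" for h t where
  empty: "forest_arrows h t {}"
| add_pendant: "forest_arrows h t S \<Longrightarrow> h a \<noteq> t a \<Longrightarrow> w \<in> {h a, t a} \<Longrightarrow>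
    \<forall>a'\<in>S. h a' \<noteq> w \<and> t a' \<noteq> w \<Longrightarrow> forest_arrows h t (insert a S)"

lemma U_invariant_diagonalize_forest:
  assumes inv: "U_invariant Q0 Q1 h t n f" and forest: "forest_arrows h t S"
    and A: "A \<in> filtered_rep Q1 n" and nz: "\<forall>a\<in>S. \<forall>k<n. A a k k \<noteq> 0"
  shows "\<exists>B\<in>filtered_rep Q1 n. rep_diag B = rep_diag A \<and> f B = f A \<and>
           (\<forall>a\<in>S. \<forall>i j. i < j \<longrightarrow> B a i j = 0)"
  using forest nz
proof (induction S rule: forest_arrows.induct)
  case empty
  show ?case using A by blast
next
  case (add_pendant S a w)
  then obtain B where B: "B \<in> filtered_rep Q1 n" "rep_diag B = rep_diag A" "f B = f A"
    and diagS: "\<forall>a\<in>S. \<forall>i j. i < j \<longrightarrow> B a i j = 0" by auto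
  have "B a k k = A a k k" for k
    using B(2) by (rule rep_diag_eqD)
  then have "\<forall>k<n. B a k k \<noteq> 0" using add_pendant.prems by simp
  then obtain B' where "B' \<in> filtered_rep Q1 n" "rep_diag B' = rep_diag B" "f B' = f B"
    and "\<forall>a. h a \<noteq> w \<and> t a \<noteq> w \<longrightarrow> B' a = B a" "\<forall>i j. i < j \<longrightarrow> B' a i j = 0"
    using U_invariant_diagonalize_arrow[OF inv B(1) add_pendant.hyps(2,3)] by blast
  with B diagS add_pendant.hyps(4) show ?case by (intro bexI[of _ B']) auto
qed

lemma U_invariant_eq_rep_diag_generic:
  assumes inv: "U_invariant Q0 Q1 h t n f" and forest: "forest_arrows h t Q1"
    and A: "A \<in> filtered_rep Q1 n" and nz: "\<forall>a\<in>Q1. \<forall>k<n. A a k k \<noteq> 0"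
  shows "f (rep_diag A) = f A"
proof -
  obtain B where "B \<in> filtered_rep Q1 n" "rep_diag B = rep_diag A" "f B = f A"
    "\<forall>a\<in>Q1. \<forall>i j. i < j \<longrightarrow> B a i j = 0"
    using U_invariant_diagonalize_forest[OF inv forest A nz] by blast
  then show ?thesis using filtered_rep_eq_rep_diag by metis
qed

lemma continuous_on_eq_off_finite:
  fixes g1 g2 :: "'a::{perfect_space, t1_space} \<Rightarrow> 'b::t2_space"
  assumes "continuous_on UNIV g1" "continuous_on UNIV g2" and "finite S"
    and "\<And>x. x \<notin> S \<Longrightarrow> g1 x = g2 x"
  shows "g1 x = g2 x"
proof -
  have "eventually (\<lambda>y. y \<notin> S) (at x)"
    using islimpt_finite[OF \<open>finite S\<close>] islimpt_iff_eventually by blast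
  then have "eventually (\<lambda>y. g2 y = g1 y) (at x)"
    by (rule eventually_mono) (simp add: assms(4))
  moreover have "(g1 \<longlongrightarrow> g1 x) (at x)" "(g2 \<longlongrightarrow> g2 x) (at x)"
    using assms(1,2) by (simp_all add: continuous_on_def)
  ultimately have "(g1 \<longlongrightarrow> g2 x) (at x)"
    using Lim_transform_eventually by blast
  with \<open>(g1 \<longlongrightarrow> g1 x) (at x)\<close> show ?thesis
    using tendsto_unique by (metis at_neq_bot)
qed

lemma poly_fun_continuous_on_line:
  "f \<in> poly_fun C \<Longrightarrow> continuous_on UNIV (\<lambda>s::complex. f (\<lambda>a i j. A a i j + s * E a i j))"
  by (induction f rule: poly_fun.induct) (auto intro!: continuous_intros)

lemma U_invariant_eq_rep_diag:
  assumes inv: "U_invariant Q0 Q1 h t n f" and "finite Q1" and forest: "forest_arrows h t Q1"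
    and f: "f \<in> poly_fun C" and A: "A \<in> filtered_rep Q1 n"
  shows "f (rep_diag A) = f A"
proof -
  define E where "E a i j = (if a \<in> Q1 \<and> i = j \<and> i < n then 1 else 0 :: complex)" for a i j
  define line where "line X s = (\<lambda>a i j. X a i j + s * E a i j)" for X s
  define S where "S = (\<lambda>(a, k). - A a k k) ` (Q1 \<times> {..<n})"
  have eq: "f (line (rep_diag A) s) = f (line A s)" if s: "s \<notin> S" for s
  proof -
    have L: "line A s \<in> filtered_rep Q1 n"
      using A by (auto simp: filtered_rep_def line_def E_def)
    have nz: "\<forall>a\<in>Q1. \<forall>k<n. line A s a k k \<noteq> 0"
    proof (intro ballI allI impI)
      fix a k assume "a \<in> Q1" "k < n"
      then have "s \<noteq> - A a k k" using s unfolding S_def by force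
      then show "line A s a k k \<noteq> 0"
        using \<open>a \<in> Q1\<close> \<open>k < n\<close> by (auto simp: line_def E_def add_eq_0_iff)
    qed
    have "rep_diag (line A s) = line (rep_diag A) s"
      by (auto simp: rep_diag_def line_def E_def fun_eq_iff)
    then show ?thesis
      using U_invariant_eq_rep_diag_generic[OF inv forest L nz] by simp
  qed
  have cont: "continuous_on UNIV (\<lambda>s. f (line X s))" for X
    unfolding line_def by (rule poly_fun_continuous_on_line[OF f])
  have "finite S" using \<open>finite Q1\<close> by (simp add: S_def)
  from continuous_on_eq_off_finite[OF cont cont this eq]
  have "f (line (rep_diag A) 0) = f (line A 0)" .
  then show ?thesis by (simp add: line_def)
qed

lemma poly_fun_eq:
  "f \<in> poly_fun C \<Longrightarrow> \<forall>(a, i, j)\<in>C. A a i j = B a i j \<Longrightarrow> f A = f B"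
  by (induction f rule: poly_fun.induct) auto

lemma poly_fun_rep_diag:
  "f \<in> poly_fun (upper_coords Q1 n) \<Longrightarrow> (\<lambda>A. f (rep_diag A)) \<in> poly_fun (diag_coords Q1 n)"
proof (induction f rule: poly_fun.induct)
  case (coord a i j)
  then show ?case
    by (cases "i = j")
      (auto simp: rep_diag_def upper_coords_def diag_coords_def intro: poly_fun.intros)
qed (auto intro: poly_fun.intros)

theorem U_invariant_iff_diag_poly:
  assumes "finite Q1" and "forest_arrows h t Q1" and "h ` Q1 \<subseteq> Q0" and "t ` Q1 \<subseteq> Q0"
    and f: "f \<in> poly_fun (upper_coords Q1 n)"
  shows "U_invariant Q0 Q1 h t n f \<longleftrightarrow>
           (\<exists>g \<in> poly_fun (diag_coords Q1 n). \<forall>A \<in> filtered_rep Q1 n. f A = g A)"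
proof
  assume "U_invariant Q0 Q1 h t n f"
  then show "\<exists>g \<in> poly_fun (diag_coords Q1 n). \<forall>A \<in> filtered_rep Q1 n. f A = g A"
    using U_invariant_eq_rep_diag[OF _ assms(1,2) f] poly_fun_rep_diag[OF f] by metis
next
  assume "\<exists>g \<in> poly_fun (diag_coords Q1 n). \<forall>A \<in> filtered_rep Q1 n. f A = g A"
  then obtain g where g: "g \<in> poly_fun (diag_coords Q1 n)"
    and fg: "\<forall>A \<in> filtered_rep Q1 n. f A = g A" by blast
  show "U_invariant Q0 Q1 h t n f"
    unfolding U_invariant_def
  proof (intro allI impI ballI)
    fix u v A
    assume "\<forall>i\<in>Q0. u i \<in> unipotent n \<and> v i \<in> unipotent n \<and> mat_mult n (u i) (v i) = mat_id n"
    then have u: "\<forall>i\<in>h ` Q1. u i \<in> unipotent n" and v: "\<forall>i\<in>t ` Q1. v i \<in> unipotent n"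
      using assms(3,4) by blast+
    assume A: "A \<in> filtered_rep Q1 n"
    have "g (quiver_act n h t u v A) = g A"
      using poly_fun_eq[OF g] quiver_act_diag_coords[OF A u v] by blast
    then show "f (quiver_act n h t u v A) = f A"
      using fg A quiver_act_filtered_rep(1)[OF A u v] by simp
  qed
qed

section \<open>Dynkin quivers\<close>

lemma dynkin_edge_shape:
  assumes "dynkin_valid T" and "e \<in> dynkin_edges T"
  shows "\<exists>x y. e = {x, y} \<and> x < y \<and> y < dynkin_rank T"
proof -
  have pair: "\<exists>a b. {x, y} = {a, b} \<and> a < b \<and> b < r" if "x < y" "y < r" for x y r :: nat
    using that by blast
  show ?thesis using assms by (cases T) (auto intro!: pair)
qed

lemma dynkin_edges_finite:
  assumes "dynkin_valid T"
  shows "finite (dynkin_edges T)"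
proof (rule finite_subset)
  show "dynkin_edges T \<subseteq> Pow {..<dynkin_rank T}"
    using dynkin_edge_shape[OF assms] by fastforce
qed simp

text \<open>In the standard labelling every vertex except 0 is the larger end of exactly one edge.\<close>
lemma dynkin_edge_Max_inj:
  assumes "dynkin_valid T" "e \<in> dynkin_edges T" "e' \<in> dynkin_edges T" "Max e = Max e'"
  shows "e = e'"
  using assms by (cases T) (auto simp: max_def split: if_splits)

lemma dynkin_quiver_finite_arrows:
  assumes "dynkin_quiver T Q0 Q1 h t"
  shows "finite Q1"
proof -
  from assms obtain \<phi> where "dynkin_valid T"
    and "bij_betw (\<lambda>a. {\<phi> (t a), \<phi> (h a)}) Q1 (dynkin_edges T)"
    unfolding dynkin_quiver_def by blast
  then show ?thesis using bij_betw_finite dynkin_edges_finite by blast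
qed

lemma dynkin_quiver_forest_arrows:
  assumes "dynkin_quiver T Q0 Q1 h t"
  shows "forest_arrows h t Q1"
proof -
  from assms obtain \<phi> where valid: "dynkin_valid T" and Q0: "h ` Q1 \<subseteq> Q0" "t ` Q1 \<subseteq> Q0"
    and \<phi>: "bij_betw \<phi> Q0 {..<dynkin_rank T}"
    and edges: "bij_betw (\<lambda>a. {\<phi> (t a), \<phi> (h a)}) Q1 (dynkin_edges T)"
    unfolding dynkin_quiver_def by blast
  define top where "top a = max (\<phi> (t a)) (\<phi> (h a))" for a
  have edge: "{\<phi> (t a), \<phi> (h a)} \<in> dynkin_edges T" if "a \<in> Q1" for a
    using edges that by (auto simp: bij_betw_def)
  have loopfree: "\<phi> (t a) \<noteq> \<phi> (h a)" if "a \<in> Q1" for a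
  proof
    assume "\<phi> (t a) = \<phi> (h a)"
    then show False
      using dynkin_edge_shape[OF valid edge[OF that]] by (auto simp: doubleton_eq_iff)
  qed
  have top_inj: "inj_on top Q1"
  proof (rule inj_onI)
    fix a a' assume "a \<in> Q1" "a' \<in> Q1" "top a = top a'"
    then have "{\<phi> (t a), \<phi> (h a)} = {\<phi> (t a'), \<phi> (h a')}"
      by (intro dynkin_edge_Max_inj[OF valid edge edge]) (simp_all add: top_def)
    with edges \<open>a \<in> Q1\<close> \<open>a' \<in> Q1\<close> show "a = a'"
      by (auto simp: bij_betw_def inj_on_def)
  qed
  \<comment> \<open>Adding the arrows in increasing order of top, the endpoint labelled top a is new.\<close>
  have "forest_arrows h t {a\<in>Q1. top a < k}" for k
  proof (induction k)
    case 0
    show ?case by (simp add: forest_arrows.empty)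
  next
    case (Suc k)
    show ?case
    proof (cases "\<exists>a\<in>Q1. top a = k")
      case False
      then have "{a\<in>Q1. top a < Suc k} = {a\<in>Q1. top a < k}" by (auto simp: less_Suc_eq)
      with Suc.IH show ?thesis by simp
    next
      case True
      then obtain a where a: "a \<in> Q1" "top a = k" by blast
      define w where "w = (if \<phi> (h a) = k then h a else t a)"
      have w: "w \<in> {h a, t a}" by (simp add: w_def)
      have "\<phi> w = k" using a by (auto simp: w_def top_def max_def)
      then have pendant: "\<forall>a'\<in>{a\<in>Q1. top a < k}. h a' \<noteq> w \<and> t a' \<noteq> w"
        by (auto simp: top_def)
      have "h a \<noteq> t a" using loopfree[OF a(1)] by auto
      with Suc.IH have "forest_arrows h t (insert a {a\<in>Q1. top a < k})"
        using w pendant by (rule forest_arrows.add_pendant)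
      moreover have "{a\<in>Q1. top a < Suc k} = insert a {a\<in>Q1. top a < k}"
        using a top_inj by (auto simp: less_Suc_eq inj_on_def)
      ultimately show ?thesis by simp
    qed
  qed
  moreover have "{a\<in>Q1. top a < dynkin_rank T} = Q1"
    using Q0 \<phi> by (auto simp: top_def bij_betw_def)
  ultimately show ?thesis by metis
qed

theorem mainTheorem1:
  fixes T :: dynkin_type and Q0 :: "'v set" and Q1 :: "'e set"
    and h t :: "'e \<Rightarrow> 'v" and n :: nat
  assumes "n \<ge> 1"
    and "dynkin_quiver T Q0 Q1 h t"
  shows "\<forall>f \<in> poly_fun (upper_coords Q1 n).
           U_invariant Q0 Q1 h t n f \<longleftrightarrow>
           (\<exists>g \<in> poly_fun (diag_coords Q1 n). \<forall>A \<in> filtered_rep Q1 n. f A = g A)"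
proof
  fix f assume f: "f \<in> poly_fun (upper_coords Q1 n)"
  have "h ` Q1 \<subseteq> Q0" "t ` Q1 \<subseteq> Q0"
    using assms(2) unfolding dynkin_quiver_def by blast+
  then show "U_invariant Q0 Q1 h t n f \<longleftrightarrow>
      (\<exists>g \<in> poly_fun (diag_coords Q1 n). \<forall>A \<in> filtered_rep Q1 n. f A = g A)"
    by (rule U_invariant_iff_diag_poly[OF dynkin_quiver_finite_arrows[OF assms(2)]
          dynkin_quiver_forest_arrows[OF assms(2)] _ _ f])
qed

end
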